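(* Let $F$ be a semi-flow on a connected metrizable space $X$ and let $S$ be an $F$-stream. Then, for every $x\in X$: (1) $\mathrm{Down}_S(x)\supset\mathcal{O}_F(x)\cup\mathrm{Down}_S(\Omega_F(x))$; (2) $\mathrm{Down}_S(x)\supset\mathcal{O}_F(x)\cup\mathrm{Down}_S(y)$ for all $y\in\mathcal{O}_F(x)$.
   Context: A semi-flow on $X$ is a continuous map $F:\mathbb{T}\times X\to X$, $(t,x)\mapsto F^t(x)$, where $\mathbb{T}=\{0,1,2,\dots\}$ or $[0,\infty)$, with $F^0=\mathrm{id}$ and $F^{t_1+t_2}=F^{t_2}\circ F^{t_1}$. Put $\mathcal{O}_F(x)=\{F^t(x):t\in\mathbb{T}\}$ and $\mathcal{O}_F=\{(x,y):y\in\mathcal{O}_F(x)\}$. $\Omega_F(x)$ is the set of limits of $F^{t_n}(x)$ with $t_n\to\infty$. An $F$-stream is a reflexive, transitive relation $S\subset X\times X$ that is closed in $X\times X$ and contains $\mathcal{O}_F$. $\mathrm{Down}_S(x)=\{y:(x,y)\in S\}$ and $\mathrm{Down}_S(M)=\bigcup_{z\in M}\mathrm{Down}_S(z)$. *)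

theory Defs
  imports "HOL-Analysis.Analysis"
begin

definition time_domain :: "real set \<Rightarrow> bool" where
  "time_domain T \<longleftrightarrow> T = {t. \<exists>n::nat. t = real n} \<or> T = {0..}"

definition semiflow :: "real set \<Rightarrow> (real \<Rightarrow> 'a::topological_space \<Rightarrow> 'a) \<Rightarrow> bool" where
  "semiflow T F \<longleftrightarrow> time_domain T
     \<and> continuous_on (T \<times> UNIV) (\<lambda>(t, x). F t x)
     \<and> (\<forall>x. F 0 x = x)
     \<and> (\<forall>t1\<in>T. \<forall>t2\<in>T. \<forall>x. F (t1 + t2) x = F t2 (F t1 x))"

definition orbit :: "real set \<Rightarrow> (real \<Rightarrow> 'a \<Rightarrow> 'a) \<Rightarrow> 'a \<Rightarrow> 'a set" where
  "orbit T F x = {F t x | t. t \<in> T}"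

definition orbit_rel :: "real set \<Rightarrow> (real \<Rightarrow> 'a \<Rightarrow> 'a) \<Rightarrow> ('a \<times> 'a) set" where
  "orbit_rel T F = {(x, y). y \<in> orbit T F x}"

definition omega_limit :: "real set \<Rightarrow> (real \<Rightarrow> 'a::topological_space \<Rightarrow> 'a) \<Rightarrow> 'a \<Rightarrow> 'a set" where
  "omega_limit T F x = {y. \<exists>ts::nat \<Rightarrow> real. (\<forall>n. ts n \<in> T) \<and> filterlim ts at_top sequentially
       \<and> ((\<lambda>n. F (ts n) x) \<longlongrightarrow> y) sequentially}"

definition stream :: "real set \<Rightarrow> (real \<Rightarrow> 'a::topological_space \<Rightarrow> 'a) \<Rightarrow> ('a \<times> 'a) set \<Rightarrow> bool" where
  "stream T F S \<longleftrightarrow> refl S \<and> trans S \<and> closed S \<and> orbit_rel T F \<subseteq> S"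

definition Down :: "('a \<times> 'a) set \<Rightarrow> 'a \<Rightarrow> 'a set" where
  "Down S x = {y. (x, y) \<in> S}"

definition Down_set :: "('a \<times> 'a) set \<Rightarrow> 'a set \<Rightarrow> 'a set" where
  "Down_set S M = (\<Union>z\<in>M. Down S z)"

end

theory Submission
  imports Defs
begin

text \<open>Every point of the orbit of \<open>x\<close> is downstream of \<open>x\<close> because the stream contains the
  orbit relation; every \<open>\<omega>\<close>-limit point is a limit of orbit points, hence downstream of \<open>x\<close>
  because the stream is closed; and by transitivity everything downstream of such a point is
  downstream of \<open>x\<close>.\<close>

lemma Down_mono:
  assumes "trans S" and "(x, y) \<in> S"
  shows "Down S y \<subseteq> Down S x"
  using assms unfolding Down_def by (auto elim: transE)

lemma Down_set_subset_Down:
  assumes "trans S" and "M \<subseteq> Down S x"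
  shows "Down_set S M \<subseteq> Down S x"
  using assms Down_mono unfolding Down_set_def Down_def by fastforce

lemma orbit_subset_Down:
  assumes "orbit_rel T F \<subseteq> S"
  shows "orbit T F x \<subseteq> Down S x"
  using assms unfolding orbit_rel_def Down_def by auto

lemma omega_limit_subset_Down:
  assumes "closed S" and "orbit_rel T F \<subseteq> S"
  shows "omega_limit T F x \<subseteq> Down S x"
proof
  fix y assume "y \<in> omega_limit T F x"
  then obtain ts where ts_in_T: "\<And>n. ts n \<in> T"
    and lim: "((\<lambda>n. F (ts n) x) \<longlongrightarrow> y) sequentially"
    unfolding omega_limit_def by blast
  have orbit_points: "(x, F (ts n) x) \<in> S" for n
    using assms(2) ts_in_T unfolding orbit_rel_def orbit_def by blast
  have "((\<lambda>n. (x, F (ts n) x)) \<longlongrightarrow> (x, y)) sequentially"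
    using lim by (intro tendsto_Pair tendsto_const)
  then have "(x, y) \<in> S"
    by (rule closed_sequentially[OF \<open>closed S\<close> orbit_points])
  then show "y \<in> Down S x"
    unfolding Down_def by simp
qed

theorem proposition18:
  fixes T :: "real set" and F :: "real \<Rightarrow> 'a::metric_space \<Rightarrow> 'a" and S :: "('a \<times> 'a) set"
  assumes "connected (UNIV :: 'a set)"
    and "semiflow T F"
    and "stream T F S"
  shows "\<forall>x. (orbit T F x \<union> Down_set S (omega_limit T F x) \<subseteq> Down S x)
            \<and> (\<forall>y\<in>orbit T F x. orbit T F x \<union> Down S y \<subseteq> Down S x)"
proof (intro allI conjI ballI)
  fix x
  have "trans S" "closed S" and orbit_rel: "orbit_rel T F \<subseteq> S"
    using \<open>stream T F S\<close> unfolding stream_def by simp_all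
  have orbit: "orbit T F x \<subseteq> Down S x"
    using orbit_rel by (rule orbit_subset_Down)
  have "Down_set S (omega_limit T F x) \<subseteq> Down S x"
    using \<open>trans S\<close> omega_limit_subset_Down[OF \<open>closed S\<close> orbit_rel]
    by (rule Down_set_subset_Down)
  with orbit show "orbit T F x \<union> Down_set S (omega_limit T F x) \<subseteq> Down S x"
    by simp
  fix y assume "y \<in> orbit T F x"
  then have "(x, y) \<in> S"
    using orbit unfolding Down_def by blast
  with \<open>trans S\<close> have "Down S y \<subseteq> Down S x"
    by (rule Down_mono)
  with orbit show "orbit T F x \<union> Down S y \<subseteq> Down S x"
    by simp
qed

end
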